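(* Let $p,q>0$ with $p+q=2k\le n$, $\epsilon,\eta\in\{0,1\}$, and let $\tau$ be special with associated integers $u,v$ and $i'_r,j'_s$. Let $x_1>\dots>x_q$ and $y_1>\dots>y_p$ be integers in $[u+v+1,n]$ with $x_i\ne y_j$ for all $i,j$, such that \[ x_i+u+q+1-i\equiv \eta\pmod 2\ (1\le i\le q),\qquad y_{p+1-m}+v+m-1\equiv\epsilon\pmod 2\ (1\le m\le p). \] Then there is exactly one tuple $(w\tau,\sigma,a,b)$ arising from a solution $(w,\sigma,a,b)$ of equation (E) such that the first $q$ coordinates of $\sigma\rho_{\mathfrak g}$ are $x_1,\dots,x_q$ and the last $p$ coordinates are $-y_p,\dots,-y_1$.
   Context: Setting: $n\ge1$, $\mathfrak g=\mathfrak{sp}(2n,\mathbb C)$, $\mathfrak k=\mathfrak{gl}(n,\mathbb C)$, compact Cartan and its dual identified with $\mathbb C^n$; positive compact roots $e_i-e_j$ ($i<j$), positive noncompact roots $e_i+e_j$ ($i<j$), $2e_i$; $\rho_{\mathfrak g}=(n,\dots,1)$, $\rho_{\mathfrak k}=(\frac{n-1}{2},\dots,-\frac{n-1}{2})$; $W$ = all signed permutations of coordinates, $W_{\mathfrak k}=S_n$; $W^1=\{\sigma\in W:\sigma\rho_{\mathfrak g}\text{ satisfies }(\sigma\rho_{\mathfrak g})_1\ge\dots\ge(\sigma\rho_{\mathfrak g})_n\}$. Let $k\ge1$, $\Lambda_k=(n-k,\dots,1,0,-1,\dots,-k+1)$. Special weights: for integers $u,v\ge0$ with $u+v=n-2k$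 and $i_1>\dots>i_u$, $j_1>\dots>j_v$ with $\{i_1,\dots,i_u\}\sqcup\{j_1,\dots,j_v\}=\{k+1,\dots,n-k\}$, put $i'_r=i_r-k$, $j'_s=j_s-k$ and let $\tau=x\Lambda_k-\rho_{\mathfrak k}$ where $x\Lambda_k=(i_1,\dots,i_u,k,k-1,\dots,-k+1,-j_v,\dots,-j_1)$; such $\tau$ are called special, with associated integers $u,v$. Equation (E): for special $\tau$, a solution of (E) is a tuple $(w,\sigma,a,b)$ with $w\in W_{\mathfrak k}$, $\sigma\in W^1$, integers $a_1\ge\dots\ge a_p\ge0$, $b_1\ge\dots\ge b_q\ge0$, such that, with $\alpha_i=\epsilon+2a_i$, $\beta_j=\eta+2b_j$, \[ w\tau+\rho_{\mathfrak k}+(\tfrac{q-p}{2},\dots,\tfrac{q-p}{2})=\sigma\rho_{\mathfrak g}+(-\beta_1,\dots,-\beta_q,0,\dots,0,\alpha_p,\dots,\alpha_1), \] the middle block having $n-p-q$ zeros. *)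

theory Defs
  imports Complex_Main "HOL-Combinatorics.Permutations" "HOL-Number_Theory.Cong"
begin

text \<open>Vectors in C^n are represented as lists of length n (coordinates 1..n are list
positions 0..n-1); all vectors occurring here have rational entries.\<close>

definition vadd :: "rat list \<Rightarrow> rat list \<Rightarrow> rat list" where
  "vadd xs ys = map2 (+) xs ys"

definition vsub :: "rat list \<Rightarrow> rat list \<Rightarrow> rat list" where
  "vsub xs ys = map2 (-) xs ys"

definition rho_g :: "nat \<Rightarrow> rat list" where
  "rho_g n = map (\<lambda>i. of_nat (n - i)) [0..<n]"

definition rho_k :: "nat \<Rightarrow> rat list" where
  "rho_k n = map (\<lambda>i. (of_nat n - 1) / 2 - of_nat i) [0..<n]"

text \<open>Signed permutations (the Weyl group W of type C_n): bijections sigma of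
{-n..-1} union {1..n} with sigma(-x) = -sigma(x), identity elsewhere.
sigma corresponds to the linear map e_i |-> e_(sigma i), where e_(-i) = -e_i.\<close>
definition signed_perm :: "nat \<Rightarrow> (int \<Rightarrow> int) \<Rightarrow> bool" where
  "signed_perm n \<sigma> \<longleftrightarrow> \<sigma> permutes ({- int n..-1} \<union> {1..int n}) \<and> (\<forall>x. \<sigma> (- x) = - \<sigma> x)"

definition sp_act :: "nat \<Rightarrow> (int \<Rightarrow> int) \<Rightarrow> rat list \<Rightarrow> rat list" where
  "sp_act n \<sigma> v = map (\<lambda>j. let i = inv \<sigma> (int j) in of_int (sgn i) * v ! (nat \<bar>i\<bar> - 1)) [1..<n+1]"

definition W1 :: "nat \<Rightarrow> (int \<Rightarrow> int) \<Rightarrow> bool" where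
  "W1 n \<sigma> \<longleftrightarrow> signed_perm n \<sigma> \<and> sorted_wrt (\<ge>) (sp_act n \<sigma> (rho_g n))"

definition xLambda :: "nat \<Rightarrow> int list \<Rightarrow> int list \<Rightarrow> rat list" where
  "xLambda k I J = map of_int (I @ rev [1 - int k..int k] @ map uminus (rev J))"

text \<open>Data (u,v,I,J) defining a special weight, I = [i_1>...>i_u], J = [j_1>...>j_v].\<close>
definition special_data :: "nat \<Rightarrow> nat \<Rightarrow> nat \<Rightarrow> nat \<Rightarrow> int list \<Rightarrow> int list \<Rightarrow> bool" where
  "special_data n k u v I J \<longleftrightarrow> u + v = n - 2 * k \<and> length I = u \<and> length J = v \<and>
     sorted_wrt (>) I \<and> sorted_wrt (>) J \<and> set I \<inter> set J = {} \<and>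
     set I \<union> set J = {int k + 1..int n - int k}"

definition tau_of :: "nat \<Rightarrow> nat \<Rightarrow> int list \<Rightarrow> int list \<Rightarrow> rat list" where
  "tau_of n k I J = vsub (xLambda k I J) (rho_k n)"

text \<open>Action of w in W_k = S_n on a vector (permutation of coordinates).\<close>
definition perm_act :: "(nat \<Rightarrow> nat) \<Rightarrow> rat list \<Rightarrow> rat list" where
  "perm_act w v = permute_list (inv w) v"

definition corr :: "nat \<Rightarrow> nat \<Rightarrow> nat \<Rightarrow> nat \<Rightarrow> nat list \<Rightarrow> nat list \<Rightarrow> rat list" where
  "corr n \<epsilon> \<eta> pq a b =
     map (\<lambda>bj. - (of_nat \<eta> + 2 * of_nat bj)) b @ replicate (n - pq) 0 @
     rev (map (\<lambda>ai. of_nat \<epsilon> + 2 * of_nat ai) a)"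

definition solE :: "nat \<Rightarrow> nat \<Rightarrow> nat \<Rightarrow> nat \<Rightarrow> nat \<Rightarrow> rat list \<Rightarrow>
    (nat \<Rightarrow> nat) \<Rightarrow> (int \<Rightarrow> int) \<Rightarrow> nat list \<Rightarrow> nat list \<Rightarrow> bool" where
  "solE n p q \<epsilon> \<eta> \<tau> w \<sigma> a b \<longleftrightarrow>
     w permutes {..<n} \<and> W1 n \<sigma> \<and>
     length a = p \<and> sorted_wrt (\<ge>) a \<and> length b = q \<and> sorted_wrt (\<ge>) b \<and>
     vadd (vadd (perm_act w \<tau>) (rho_k n)) (replicate n ((of_nat q - of_nat p) / 2))
       = vadd (sp_act n \<sigma> (rho_g n)) (corr n \<epsilon> \<eta> (p + q) a b)"

end

theory Submission imports Defs begin

text \<open>Adding \<open>(n - 1)/2 - k\<close> to every coordinate turns (E) into an equality of integer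
multisets. On the left, the shifted entries of \<open>w\<tau>\<close> are those of \<open>x\<Lambda>\<^sub>k + (0, 1, \<dots>, n - 1) - k\<close>:
\<open>2k\<close> copies of \<open>u\<close>, the \<open>u\<close> values \<open>i\<^sub>r - k + r \<ge> u\<close> and \<open>v\<close> values below \<open>u\<close> coming from the
\<open>j\<^sub>s\<close>. On the right stand the entries of \<open>\<sigma>\<rho>\<^sub>g + corr + (0, \<dots>, n - 1) - q\<close>. Now \<open>\<sigma>\<rho>\<^sub>g\<close> is
strictly decreasing with absolute values a permutation of \<open>1, \<dots>, n\<close>; once its first \<open>q\<close> and
last \<open>p\<close> entries are prescribed, its middle block has absolute values \<open>1, \<dots>, u + v\<close>. Counting
the entries below and above \<open>u\<close> forces the first \<open>u\<close> middle entries to be positive and the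
last \<open>v\<close> negative; matching the entries below \<open>u\<close> recovers the \<open>j\<^sub>s\<close>, and the positive part,
having the complementary absolute values, must be the \<open>i\<^sub>r\<close>. The remaining \<open>2k\<close> entries, which
involve \<open>a\<close>, \<open>b\<close>, \<open>x\<^sub>i\<close> and \<open>y\<^sub>j\<close>, must then all equal \<open>u\<close>; this determines \<open>a\<close> and \<open>b\<close>, and the
parity hypotheses say precisely that the values so obtained are natural numbers.\<close>

lemma sorted_wrt_gt_nth_gap:
  fixes l :: "int list"
  assumes "sorted_wrt (>) l" "i \<le> j" "j < length l"
  shows "l ! j + int (j - i) \<le> l ! i"
  using assms(2,3)
proof (induction j)
  case (Suc j)
  show ?case
  proof (cases "i = Suc j")
    case False
    then have "i \<le> j" and "l ! j + int (j - i) \<le> l ! i" using Suc by simp_all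
    moreover have "l ! Suc j < l ! j" using assms(1) Suc.prems by (simp add: sorted_wrt_iff_nth_less)
    ultimately show ?thesis by (simp add: Suc_diff_le)
  qed simp
qed simp

lemma distinct_if_sorted_wrt_gt: "sorted_wrt (>) (l :: 'a :: linorder list) \<Longrightarrow> distinct l"
  by (induction l) auto

lemma sorted_wrt_gt_if_ge_distinct:
  "sorted_wrt (\<ge>) (l :: 'a :: linorder list) \<Longrightarrow> distinct l \<Longrightarrow> sorted_wrt (>) l"
  by (induction l) (auto simp: order_less_le)

lemma sorted_wrt_ge_mset_unique:
  fixes l1 l2 :: "'a :: linorder list"
  assumes "sorted_wrt (\<ge>) l1" "sorted_wrt (\<ge>) l2" "mset l1 = mset l2"
  shows "l1 = l2"
proof -
  have "sorted (rev l1)" "sorted (rev l2)" using assms(1,2) by (simp_all add: sorted_wrt_rev)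
  then have "rev l1 = rev l2" using assms(3) by (metis mset_rev properties_for_sort sorted_sort_id)
  then show ?thesis by simp
qed

lemma sorted_wrt_gt_set_unique:
  fixes l1 l2 :: "'a :: linorder list"
  assumes "sorted_wrt (>) l1" "sorted_wrt (>) l2" "set l1 = set l2"
  shows "l1 = l2"
proof -
  have "sorted_wrt (<) (rev l1)" "sorted_wrt (<) (rev l2)" using assms(1,2) by (simp_all add: sorted_wrt_rev)
  then have "rev l1 = rev l2" using sorted_distinct_set_unique assms(3)
    by (metis set_rev strict_sorted_iff)
  then show ?thesis by simp
qed

lemma mset_map_of_int_eq:
  assumes "mset (map (of_int :: int \<Rightarrow> 'a :: floor_ceiling) X) = mset (map of_int Y)"
  shows "mset X = mset Y"
proof -
  have "mset (map floor (map (of_int :: int \<Rightarrow> 'a) X)) = mset (map floor (map (of_int :: int \<Rightarrow> 'a) Y))"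
    using assms by (simp only: mset_map)
  then show ?thesis by (simp add: o_def)
qed

lemma length_filter_eq_if_mset_eq: "mset X = mset Y \<Longrightarrow> length (filter P X) = length (filter P Y)"
  by (metis mset_filter size_mset)

lemma twice_nat_half_of_even:
  assumes "(X :: int) mod 2 = 0" "- 1 \<le> X"
  shows "2 * int (nat (X div 2)) = X"
proof -
  have "X div 2 * 2 = X" using div_mult_mod_eq[of X 2] assms(1) by simp
  then show ?thesis using assms(2) by linarith
qed

section \<open>Signed permutations and \<open>\<sigma>\<rho>\<^sub>g\<close>\<close>

abbreviation signed_domain :: "nat \<Rightarrow> int set" where
  "signed_domain n \<equiv> {- int n..-1} \<union> {1..int n}"

lemma signed_perm_inv:
  assumes "signed_perm n \<sigma>"
  shows "inv \<sigma> permutes signed_domain n" "inv \<sigma> (- x) = - inv \<sigma> x"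
proof -
  have P: "\<sigma> permutes signed_domain n" and odd: "\<And>x. \<sigma> (- x) = - \<sigma> x"
    using assms by (auto simp: signed_perm_def)
  show "inv \<sigma> permutes signed_domain n" using permutes_inv[OF P] .
  have "\<sigma> (- inv \<sigma> x) = - x" using odd permutes_inverses(1)[OF P] by metis
  then show "inv \<sigma> (- x) = - inv \<sigma> x" using permutes_inverses(2)[OF P] by metis
qed

lemma signed_perm_inv_of_odd_permutation:
  assumes g: "g permutes signed_domain n" and odd: "\<And>x. g (- x) = - g x"
  shows "signed_perm n (inv g)" "inv (inv g) = g"
proof -
  have "g (- inv g x) = - x" for x using odd permutes_inverses(1)[OF g] by metis
  then have "inv g (- x) = - inv g x" for x using permutes_inverses(2)[OF g] by metis
  then show "signed_perm n (inv g)" using permutes_inv[OF g] by (simp add: signed_perm_def)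
  show "inv (inv g) = g" by (rule permutes_inv_inv[OF g])
qed

lemma abs_inv_signed_perm_bounds:
  assumes "signed_perm n \<sigma>" "j < n"
  shows "1 \<le> \<bar>inv \<sigma> (int j + 1)\<bar> \<and> \<bar>inv \<sigma> (int j + 1)\<bar> \<le> int n"
proof -
  have "int j + 1 \<in> signed_domain n" using assms(2) by auto
  then have "inv \<sigma> (int j + 1) \<in> signed_domain n"
    using permutes_in_image[OF signed_perm_inv(1)[OF assms(1)]] by blast
  then show ?thesis by auto
qed

definition signed_rho :: "nat \<Rightarrow> (int \<Rightarrow> int) \<Rightarrow> int list" where
  "signed_rho n \<sigma> =
     map (\<lambda>j. sgn (inv \<sigma> (int j + 1)) * (int n + 1 - \<bar>inv \<sigma> (int j + 1)\<bar>)) [0..<n]"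

lemma length_signed_rho [simp]: "length (signed_rho n \<sigma>) = n"
  by (simp add: signed_rho_def)

lemma signed_rho_nth:
  "j < n \<Longrightarrow> signed_rho n \<sigma> ! j = sgn (inv \<sigma> (int j + 1)) * (int n + 1 - \<bar>inv \<sigma> (int j + 1)\<bar>)"
  by (simp add: signed_rho_def)

lemma sp_act_rho_g:
  assumes "signed_perm n \<sigma>"
  shows "sp_act n \<sigma> (rho_g n) = map of_int (signed_rho n \<sigma>)"
proof (rule nth_equalityI)
  show "length (sp_act n \<sigma> (rho_g n)) = length (map of_int (signed_rho n \<sigma>))"
    by (simp add: sp_act_def del: upt_Suc)
  fix j assume "j < length (sp_act n \<sigma> (rho_g n))"
  then have j: "j < n" by (simp add: sp_act_def del: upt_Suc)
  define i where "i = inv \<sigma> (int j + 1)"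
  have b: "1 \<le> \<bar>i\<bar>" "\<bar>i\<bar> \<le> int n" using abs_inv_signed_perm_bounds[OF assms j] i_def by auto
  have "rho_g n ! (nat \<bar>i\<bar> - 1) = of_int (int n + 1 - \<bar>i\<bar>)"
    using b by (simp add: rho_g_def of_nat_diff)
  moreover have "[1..<n+1] ! j = Suc j" using j by (simp add: nth_upt del: upt_Suc)
  moreover have "inv \<sigma> (1 + int j) = i" by (simp add: i_def add.commute)
  ultimately show "sp_act n \<sigma> (rho_g n) ! j = map of_int (signed_rho n \<sigma>) ! j"
    using j unfolding sp_act_def signed_rho_def i_def[symmetric]
    by (simp add: i_def[symmetric] Let_def of_int_mult del: upt_Suc)
qed

lemma abs_signed_rho_nth:
  assumes "signed_perm n \<sigma>" "j < n"
  shows "\<bar>signed_rho n \<sigma> ! j\<bar> = int n + 1 - \<bar>inv \<sigma> (int j + 1)\<bar>"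
    and "1 \<le> \<bar>signed_rho n \<sigma> ! j\<bar>" "\<bar>signed_rho n \<sigma> ! j\<bar> \<le> int n"
proof -
  have b: "1 \<le> \<bar>inv \<sigma> (int j + 1)\<bar>" "\<bar>inv \<sigma> (int j + 1)\<bar> \<le> int n"
    using abs_inv_signed_perm_bounds[OF assms] by auto
  then have "\<bar>sgn (inv \<sigma> (int j + 1))\<bar> = 1" by (auto simp: sgn_if)
  then show "\<bar>signed_rho n \<sigma> ! j\<bar> = int n + 1 - \<bar>inv \<sigma> (int j + 1)\<bar>"
    using b by (simp add: signed_rho_nth[OF assms(2)] abs_mult)
  then show "1 \<le> \<bar>signed_rho n \<sigma> ! j\<bar>" "\<bar>signed_rho n \<sigma> ! j\<bar> \<le> int n" using b by auto
qed

lemma inv_signed_perm_eq: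
  assumes "signed_perm n \<sigma>" "1 \<le> x" "x \<le> int n"
  shows "inv \<sigma> x = sgn (signed_rho n \<sigma> ! (nat x - 1)) * (int n + 1 - \<bar>signed_rho n \<sigma> ! (nat x - 1)\<bar>)"
proof -
  define j where "j = nat x - 1"
  have j: "j < n" and xj: "x = int j + 1" using assms(2,3) by (auto simp: j_def)
  have b: "1 \<le> \<bar>inv \<sigma> (int j + 1)\<bar>" "\<bar>inv \<sigma> (int j + 1)\<bar> \<le> int n"
    using abs_inv_signed_perm_bounds[OF assms(1) j] by auto
  have "sgn (signed_rho n \<sigma> ! j) = sgn (inv \<sigma> (int j + 1))"
    using b by (simp add: signed_rho_nth[OF j] sgn_mult)
  then have "inv \<sigma> (int j + 1) = sgn (signed_rho n \<sigma> ! j) * (int n + 1 - \<bar>signed_rho n \<sigma> ! j\<bar>)"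
    using abs_signed_rho_nth(1)[OF assms(1) j] by (simp add: sgn_mult_abs)
  then show ?thesis unfolding j_def[symmetric] xj[symmetric] .
qed

lemma distinct_abs_signed_rho:
  assumes "signed_perm n \<sigma>"
  shows "distinct (map abs (signed_rho n \<sigma>))"
proof (subst distinct_conv_nth, intro allI impI)
  fix i j
  assume ij: "i < length (map abs (signed_rho n \<sigma>))" "j < length (map abs (signed_rho n \<sigma>))" "i \<noteq> j"
  then have i: "i < n" and j: "j < n" by auto
  show "map abs (signed_rho n \<sigma>) ! i \<noteq> map abs (signed_rho n \<sigma>) ! j"
  proof
    assume "map abs (signed_rho n \<sigma>) ! i = map abs (signed_rho n \<sigma>) ! j"
    then have "\<bar>inv \<sigma> (int i + 1)\<bar> = \<bar>inv \<sigma> (int j + 1)\<bar>"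
      using abs_signed_rho_nth(1)[OF assms i] abs_signed_rho_nth(1)[OF assms j] i j by simp
    then have "inv \<sigma> (int i + 1) = inv \<sigma> (int j + 1) \<or> inv \<sigma> (int i + 1) = inv \<sigma> (- (int j + 1))"
      using signed_perm_inv(2)[OF assms] abs_eq_iff by metis
    moreover have "inj (inv \<sigma>)" using permutes_inj[OF signed_perm_inv(1)[OF assms]] .
    ultimately have "int i + 1 = int j + 1 \<or> int i + 1 = - (int j + 1)" by (meson injD)
    then show False using ij(3) by auto
  qed
qed

lemma signed_rho_inject:
  assumes "signed_perm n \<sigma>1" "signed_perm n \<sigma>2" "signed_rho n \<sigma>1 = signed_rho n \<sigma>2"
  shows "\<sigma>1 = \<sigma>2"
proof -
  have P1: "inv \<sigma>1 permutes signed_domain n" and P2: "inv \<sigma>2 permutes signed_domain n"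
    using signed_perm_inv assms by auto
  have pos: "inv \<sigma>1 x = inv \<sigma>2 x" if "1 \<le> x" "x \<le> int n" for x
    using inv_signed_perm_eq[OF assms(1) that] inv_signed_perm_eq[OF assms(2) that] assms(3) by simp
  have "inv \<sigma>1 x = inv \<sigma>2 x" for x
  proof (cases "x \<in> signed_domain n")
    case True
    then consider "1 \<le> x" "x \<le> int n" | "1 \<le> - x" "- x \<le> int n" by fastforce
    then show ?thesis
    proof cases
      case 2
      then have "inv \<sigma>1 (- x) = inv \<sigma>2 (- x)" using pos by blast
      then show ?thesis using signed_perm_inv(2)[OF assms(1)] signed_perm_inv(2)[OF assms(2)]
        by (metis minus_minus)
    qed (use pos in blast)
  next
    case False
    then show ?thesis using permutes_not_in[OF P1] permutes_not_in[OF P2] by simp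
  qed
  then have "inv (inv \<sigma>1) = inv (inv \<sigma>2)" by presburger
  then show ?thesis using assms(1,2) permutes_inv_inv unfolding signed_perm_def by metis
qed

lemma signed_rho_abs_bounds:
  "signed_perm n \<sigma> \<Longrightarrow> \<forall>x\<in>set (signed_rho n \<sigma>). 1 \<le> \<bar>x\<bar> \<and> \<bar>x\<bar> \<le> int n"
  using abs_signed_rho_nth(2,3) by (fastforce simp: in_set_conv_nth)

lemma W1_iff_signed_rho:
  "W1 n \<sigma> \<longleftrightarrow> signed_perm n \<sigma> \<and> sorted_wrt (\<ge>) (signed_rho n \<sigma>)"
  by (auto simp: W1_def sp_act_rho_g sorted_wrt_map)

lemma W1_sorted_signed_rho: "W1 n \<sigma> \<Longrightarrow> sorted_wrt (>) (signed_rho n \<sigma>)"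
  using W1_iff_signed_rho distinct_abs_signed_rho sorted_wrt_gt_if_ge_distinct
  by (metis distinct_map)

lemma signed_rho_surj:
  assumes len: "length r = n" and dis: "distinct (map abs r)"
    and rng: "\<forall>x\<in>set r. 1 \<le> \<bar>x\<bar> \<and> \<bar>x\<bar> \<le> int n"
  shows "\<exists>\<sigma>. signed_perm n \<sigma> \<and> signed_rho n \<sigma> = r"
proof -
  \<comment> \<open>\<open>h\<close> is the inverse of the required \<open>\<sigma>\<close> on \<open>1, \<dots>, n\<close>, read off from \<open>r\<close>; \<open>g\<close> extends it oddly.\<close>
  define h where "h x = sgn (r ! (nat x - 1)) * (int n + 1 - \<bar>r ! (nat x - 1)\<bar>)" for x
  define g where "g x = (if x \<in> signed_domain n then sgn x * h \<bar>x\<bar> else x)" for x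
  have h: "sgn (h x) = sgn (r ! (nat x - 1)) \<and> \<bar>h x\<bar> = int n + 1 - \<bar>r ! (nat x - 1)\<bar> \<and>
      1 \<le> \<bar>h x\<bar> \<and> \<bar>h x\<bar> \<le> int n" if "1 \<le> x" "x \<le> int n" for x
  proof -
    have "nat x - 1 < n" using that by auto
    then have e: "1 \<le> \<bar>r ! (nat x - 1)\<bar>" "\<bar>r ! (nat x - 1)\<bar> \<le> int n" using rng len by auto
    then have "\<bar>sgn (r ! (nat x - 1))\<bar> = 1" by (auto simp: sgn_if)
    then show ?thesis using e unfolding h_def by (auto simp: sgn_mult abs_mult)
  qed
  have abs_g: "\<bar>g x\<bar> = \<bar>h \<bar>x\<bar>\<bar>" if "x \<in> signed_domain n" for x
  proof -
    have "\<bar>sgn x\<bar> = 1" using that by (auto simp: sgn_if)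
    then show ?thesis using that by (simp add: g_def abs_mult)
  qed
  have g_in: "g x \<in> signed_domain n" if "x \<in> signed_domain n" for x
  proof -
    have "1 \<le> \<bar>x\<bar>" "\<bar>x\<bar> \<le> int n" using that by auto
    then show ?thesis using abs_g[OF that] h by fastforce
  qed
  have "inj_on g (signed_domain n)"
  proof (rule inj_onI)
    fix x y assume x: "x \<in> signed_domain n" and y: "y \<in> signed_domain n" and e: "g x = g y"
    have ax: "1 \<le> \<bar>x\<bar>" "\<bar>x\<bar> \<le> int n" and ay: "1 \<le> \<bar>y\<bar>" "\<bar>y\<bar> \<le> int n" using x y by auto
    have "\<bar>r ! (nat \<bar>x\<bar> - 1)\<bar> = \<bar>r ! (nat \<bar>y\<bar> - 1)\<bar>"
      using abs_g[OF x] abs_g[OF y] e h[OF ax] h[OF ay] by simp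
    moreover have "nat \<bar>x\<bar> - 1 < length r" "nat \<bar>y\<bar> - 1 < length r" using ax ay len by auto
    ultimately have "nat \<bar>x\<bar> - 1 = nat \<bar>y\<bar> - 1"
      using nth_eq_iff_index_eq[OF dis] by simp
    then have a: "\<bar>x\<bar> = \<bar>y\<bar>" using ax ay by arith
    then have "sgn x * h \<bar>x\<bar> = sgn y * h \<bar>x\<bar>" using e x y by (simp add: g_def)
    then have "sgn x = sgn y" using h[OF ax] by auto
    then show "x = y" using a by (metis sgn_mult_abs)
  qed
  moreover have "g ` signed_domain n = signed_domain n"
    by (rule endo_inj_surj) (use g_in calculation in blast)+
  ultimately have "g permutes signed_domain n"
    by (intro bij_imp_permutes) (auto simp: bij_betw_def g_def)
  moreover have "g (- x) = - g x" for x
    by (cases "x \<in> signed_domain n") (auto simp: g_def sgn_minus)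
  ultimately have \<sigma>: "signed_perm n (inv g)" "inv (inv g) = g"
    using signed_perm_inv_of_odd_permutation by blast+
  have "signed_rho n (inv g) = r"
  proof (rule nth_equalityI)
    fix j assume "j < length (signed_rho n (inv g))"
    then have j: "j < n" by simp
    have "inv (inv g) (int j + 1) = h (int j + 1)" using j \<sigma>(2) by (simp add: g_def)
    moreover have "nat (int j + 1) - 1 = j" by arith
    moreover have "1 \<le> int j + 1" "int j + 1 \<le> int n" using j by auto
    ultimately show "signed_rho n (inv g) ! j = r ! j"
      using j h[of "int j + 1"] by (simp add: signed_rho_nth sgn_mult_abs)
  qed (use len in simp)
  then show ?thesis using \<sigma>(1) by blast
qed

section \<open>Coordinatewise form of (E)\<close>

lemma vadd_nth: "i < length xs \<Longrightarrow> i < length ys \<Longrightarrow> vadd xs ys ! i = xs ! i + ys ! i"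
  by (simp add: vadd_def)

lemma length_vadd [simp]: "length (vadd xs ys) = min (length xs) (length ys)"
  by (simp add: vadd_def)

lemma length_rho_k [simp]: "length (rho_k n) = n"
  by (simp add: rho_k_def)

lemma rho_k_nth: "i < n \<Longrightarrow> rho_k n ! i = (of_nat n - 1) / 2 - of_nat i"
  by (simp add: rho_k_def)

lemma length_corr:
  "length a = p \<Longrightarrow> length b = q \<Longrightarrow> p + q \<le> n \<Longrightarrow> length (corr n \<epsilon> \<eta> (p + q) a b) = n"
  by (simp add: corr_def)

lemma corr_nth:
  assumes "length a = p" "length b = q" "p + q \<le> n" "i < n"
  shows "corr n \<epsilon> \<eta> (p + q) a b ! i =
    (if i < q then - (of_nat \<eta> + 2 * of_nat (b ! i))
     else if i < n - p then 0 else of_nat \<epsilon> + 2 * of_nat (a ! (n - 1 - i)))"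
proof -
  have "rev (map (\<lambda>ai. of_nat \<epsilon> + 2 * of_nat ai) a) ! t = (of_nat \<epsilon> + 2 * of_nat (a ! (p - 1 - t)) :: rat)"
    if "t < p" for t
    using that assms(1) by (simp add: rev_nth)
  from this[of "i - (n - p)"] show ?thesis
    using assms unfolding corr_def by (auto simp: nth_append)
qed

lemma vadd_rho_k_eq_iff:
  fixes L :: "rat list" and r :: "int list" and C :: "rat list"
  assumes "length L = n" "length r = n" "length C = n"
  shows "vadd (vadd L (rho_k n)) (replicate n c) = vadd (map of_int r) C
     \<longleftrightarrow> (\<forall>i<n. L ! i = of_int (r ! i) + C ! i - rho_k n ! i - c)"
  using assms by (auto simp: list_eq_iff_nth_eq vadd_nth algebra_simps)

lemma mset_perm_act:
  assumes "w permutes {..<length xs}"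
  shows "mset (perm_act w xs) = mset xs"
  by (simp add: perm_act_def mset_permute_list permutes_inv[OF assms])

lemma perm_act_surj:
  assumes "mset ys = mset xs"
  obtains w where "w permutes {..<length xs}" "perm_act w xs = ys"
proof -
  obtain w' where w': "w' permutes {..<length xs}" "permute_list w' xs = ys"
    using mset_eq_permutation[OF assms] by blast
  show ?thesis
    using w' by (intro that[of "inv w'"]) (simp_all add: perm_act_def permutes_inv permutes_inv_inv)
qed

section \<open>Solutions of (E) with prescribed ends\<close>

locale prescribed_ends =
  fixes n k p q u v \<epsilon> \<eta> :: nat and I J xs ys :: "int list"
  assumes p_pos: "p > 0" and q_pos: "q > 0" and p_q: "p + q = 2 * k" and k_le: "2 * k \<le> n"
    and eps: "\<epsilon> \<in> {0, 1}" and eta: "\<eta> \<in> {0, 1}"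
    and special: "special_data n k u v I J"
    and length_xs: "length xs = q" and sorted_xs: "sorted_wrt (>) xs"
    and length_ys: "length ys = p" and sorted_ys: "sorted_wrt (>) ys"
    and xs_range: "\<forall>x\<in>set xs. int (u + v + 1) \<le> x \<and> x \<le> int n"
    and ys_range: "\<forall>y\<in>set ys. int (u + v + 1) \<le> y \<and> y \<le> int n"
    and xs_ys_disjoint: "\<forall>x\<in>set xs. \<forall>y\<in>set ys. x \<noteq> y"
    and xs_parity: "\<forall>i\<in>{1..q}. [xs ! (i - 1) + int u + int q + 1 - int i = int \<eta>] (mod 2)"
    and ys_parity: "\<forall>m\<in>{1..p}. [ys ! (p - m) + int v + int m - 1 = int \<epsilon>] (mod 2)"
begin

lemma n_eq: "n = u + v + 2 * k"
  using special k_le by (simp add: special_data_def)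

lemma length_I: "length I = u" and length_J: "length J = v"
  and sorted_I: "sorted_wrt (>) I" and sorted_J: "sorted_wrt (>) J"
  and I_J_disjoint: "set I \<inter> set J = {}" and I_J_union: "set I \<union> set J = {int k + 1..int n - int k}"
  using special by (auto simp: special_data_def)

lemma xs_ys_union: "set xs \<union> set ys = {int (u + v) + 1..int n}"
proof -
  have "card (set xs) = q" "card (set ys) = p"
    using distinct_if_sorted_wrt_gt[OF sorted_xs] distinct_if_sorted_wrt_gt[OF sorted_ys]
      length_xs length_ys by (simp_all add: distinct_card)
  moreover have "set xs \<inter> set ys = {}" using xs_ys_disjoint by auto
  ultimately have "card (set xs \<union> set ys) = 2 * k" using p_q by (simp add: card_Un_disjoint)
  moreover have "set xs \<union> set ys \<subseteq> {int (u + v) + 1..int n}" using xs_range ys_range by auto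
  moreover have "card {int (u + v) + 1..int n} = 2 * k" using n_eq by simp
  ultimately show ?thesis using card_subset_eq by (metis finite_atLeastAtMost_int)
qed

lemma xs_nth_ge:
  assumes "i < q"
  shows "int (u + v + q) - int i \<le> xs ! i"
proof -
  have "xs ! (q - 1) + int (q - 1 - i) \<le> xs ! i"
    using sorted_wrt_gt_nth_gap[OF sorted_xs, of i "q - 1"] assms length_xs by simp
  moreover have "xs ! (q - 1) \<in> set xs" using length_xs q_pos by simp
  ultimately show ?thesis using xs_range assms by force
qed

lemma ys_nth_ge:
  assumes "j < p"
  shows "int (u + v + p) - int j \<le> ys ! j"
proof -
  have "ys ! (p - 1) + int (p - 1 - j) \<le> ys ! j"
    using sorted_wrt_gt_nth_gap[OF sorted_ys, of j "p - 1"] assms length_ys by simp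
  moreover have "ys ! (p - 1) \<in> set ys" using length_ys p_pos by simp
  ultimately show ?thesis using ys_range assms by force
qed

lemma I_nth_ge:
  assumes "r < u"
  shows "int k + int u - int r \<le> I ! r"
proof -
  have "I ! (u - 1) + int (u - 1 - r) \<le> I ! r"
    using sorted_wrt_gt_nth_gap[OF sorted_I, of r "u - 1"] assms length_I by simp
  moreover have "I ! (u - 1) \<in> set I" using length_I assms by simp
  ultimately show ?thesis using I_J_union assms by force
qed

lemma J_nth_ge:
  assumes "s < v"
  shows "int k + int s + 1 \<le> J ! (v - 1 - s)"
proof -
  have "J ! (v - 1) + int s \<le> J ! (v - 1 - s)"
    using sorted_wrt_gt_nth_gap[OF sorted_J, of "v - 1 - s" "v - 1"] assms length_J by simp
  moreover have "J ! (v - 1) \<in> set J" using length_J assms by simp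
  ultimately show ?thesis using I_J_union assms by force
qed

text \<open>As \<open>(q - p)/2 = q - k\<close>, subtracting \<open>\<rho>\<^sub>k\<close> from both sides of (E) and adding \<open>(n - 1)/2 - k\<close>
leaves integers only: \<open>shifted_tau\<close> is the shift of \<open>\<tau>\<close>, and \<open>shifted_rhs r a b\<close> is what the
right-hand side becomes when \<open>\<sigma>\<rho>\<^sub>g = r\<close>.\<close>

definition shift :: "rat \<Rightarrow> rat" where
  "shift x = x + ((of_nat n - 1) / 2 - of_nat k)"

definition xLambda_int :: "int list" where
  "xLambda_int = I @ rev [1 - int k..int k] @ map uminus (rev J)"

definition shifted_tau :: "int list" where
  "shifted_tau = map (\<lambda>j. xLambda_int ! j + int j - int k) [0..<n]"

definition shifted_I :: "int list" where
  "shifted_I = map (\<lambda>r. I ! r - int k + int r) [0..<u]"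

definition shifted_J :: "int list" where
  "shifted_J = map (\<lambda>s. int u + int s + int k - J ! (v - 1 - s)) [0..<v]"

lemma length_shifted_I [simp]: "length shifted_I = u"
  by (simp add: shifted_I_def)

lemma length_shifted_J [simp]: "length shifted_J = v"
  by (simp add: shifted_J_def)

lemma length_shifted_tau [simp]: "length shifted_tau = n"
  by (simp add: shifted_tau_def)

lemma length_xLambda_int: "length xLambda_int = n"
  using n_eq length_I length_J by (simp add: xLambda_int_def)

lemma length_tau: "length (tau_of n k I J) = n"
  using length_xLambda_int by (simp add: tau_of_def vsub_def xLambda_def xLambda_int_def[symmetric])

lemma xLambda_int_nth:
  assumes "j < n"
  shows "xLambda_int ! j = (if j < u then I ! j else if j < u + 2 * k then int k - int (j - u)
     else - J ! (v - 1 - (j - u - 2 * k)))"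
proof -
  have "rev [1 - int k..int k] ! t = int k - int t" if "t < 2 * k" for t
    using that by (simp add: rev_nth nth_upto of_nat_diff)
  moreover have "rev J ! s = J ! (v - 1 - s)" if "s < v" for s
    using that length_J by (simp add: rev_nth)
  moreover have "nat (2 * int k) = 2 * k" by simp
  ultimately show ?thesis
    using assms n_eq length_I length_J by (auto simp: xLambda_int_def nth_append)
qed

lemma shifted_tau_split: "shifted_tau = shifted_I @ replicate (2 * k) (int u) @ shifted_J"
proof (rule nth_equalityI)
  fix j assume "j < length shifted_tau"
  then have j: "j < n" by (simp add: shifted_tau_def)
  consider "j < u" | "\<not> j < u" "j < u + 2 * k" "j - u < 2 * k"
    | "\<not> j < u" "\<not> j < u + 2 * k" "\<not> j - u < 2 * k" "j - u - 2 * k < v"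
    using j n_eq by linarith
  then show "shifted_tau ! j = (shifted_I @ replicate (2 * k) (int u) @ shifted_J) ! j"
    by cases (use j in \<open>simp_all add: shifted_tau_def shifted_I_def shifted_J_def nth_append xLambda_int_nth\<close>)
qed (simp only: length_shifted_tau, simp add: n_eq)

lemma shift_tau: "map shift (tau_of n k I J) = map of_int shifted_tau"
proof (rule nth_equalityI)
  fix j assume "j < length (map shift (tau_of n k I J))"
  then have "j < n" using length_tau by simp
  then show "map shift (tau_of n k I J) ! j = map of_int shifted_tau ! j"
    using length_xLambda_int
    by (simp add: shift_def shifted_tau_def rho_k_nth tau_of_def vsub_def xLambda_def
        xLambda_int_def[symmetric])
qed (simp add: length_tau)

definition corr_int :: "nat list \<Rightarrow> nat list \<Rightarrow> nat \<Rightarrow> int" where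
  "corr_int a b i = (if i < q then - (int \<eta> + 2 * int (b ! i))
     else if i < n - p then 0 else int \<epsilon> + 2 * int (a ! (n - 1 - i)))"

definition shifted_rhs :: "int list \<Rightarrow> nat list \<Rightarrow> nat list \<Rightarrow> int list" where
  "shifted_rhs r a b = map (\<lambda>i. r ! i + int i - int q + corr_int a b i) [0..<n]"

lemma length_shifted_rhs [simp]: "length (shifted_rhs r a b) = n"
  by (simp add: shifted_rhs_def)

lemma equation_iff_shifted:
  assumes "length L = n" "length r = n" "length a = p" "length b = q"
  shows "vadd (vadd L (rho_k n)) (replicate n ((of_nat q - of_nat p) / 2))
           = vadd (map of_int r) (corr n \<epsilon> \<eta> (p + q) a b)
     \<longleftrightarrow> map shift L = map of_int (shifted_rhs r a b)"
proof -
  have pqn: "p + q \<le> n" using p_q k_le by simp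
  have corr: "corr n \<epsilon> \<eta> (p + q) a b ! i = of_int (corr_int a b i)" if "i < n" for i
    using corr_nth[OF assms(3,4) pqn that] by (simp add: corr_int_def)
  have p: "(of_nat p :: rat) = 2 * of_nat k - of_nat q"
    using p_q by (simp add: of_nat_add[symmetric] flip: of_nat_mult)
  have "L ! i = of_int (r ! i) + corr n \<epsilon> \<eta> (p + q) a b ! i - rho_k n ! i - (of_nat q - of_nat p) / 2
      \<longleftrightarrow> shift (L ! i) = of_int (shifted_rhs r a b ! i)" if "i < n" for i
  proof -
    have "shift (of_int (r ! i) + corr n \<epsilon> \<eta> (p + q) a b ! i - rho_k n ! i - (of_nat q - of_nat p) / 2)
        = of_int (shifted_rhs r a b ! i)"
      using that by (simp add: corr rho_k_nth shift_def shifted_rhs_def p field_simps)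
    moreover have "shift x = shift y \<longleftrightarrow> x = y" for x y by (simp add: shift_def)
    ultimately show ?thesis by metis
  qed
  then show ?thesis
    using vadd_rho_k_eq_iff[OF assms(1,2) length_corr[OF assms(3,4) pqn]] assms(1)
    by (auto simp: list_eq_iff_nth_eq)
qed

definition rhs_head :: "nat list \<Rightarrow> int list" where
  "rhs_head b = map (\<lambda>i. xs ! i + int i - int q - (int \<eta> + 2 * int (b ! i))) [0..<q]"

definition rhs_middle :: "int list \<Rightarrow> int list" where
  "rhs_middle mid = map (\<lambda>m. mid ! m + int m) [0..<u + v]"

definition rhs_tail :: "nat list \<Rightarrow> int list" where
  "rhs_tail a = map (\<lambda>t. - ys ! (p - 1 - t) + int (u + v) + int t + int \<epsilon> + 2 * int (a ! (p - 1 - t))) [0..<p]"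

lemma length_rhs_head [simp]: "length (rhs_head b) = q"
  by (simp add: rhs_head_def)

lemma length_rhs_middle [simp]: "length (rhs_middle mid) = u + v"
  by (simp add: rhs_middle_def)

lemma rhs_middle_nth: "m < u + v \<Longrightarrow> rhs_middle mid ! m = mid ! m + int m"
  by (simp add: rhs_middle_def)

lemma length_rhs_tail [simp]: "length (rhs_tail a) = p"
  by (simp add: rhs_tail_def)

lemma shifted_rhs_split:
  assumes "length mid = u + v"
  shows "shifted_rhs (xs @ mid @ map uminus (rev ys)) a b = rhs_head b @ rhs_middle mid @ rhs_tail a"
proof (rule nth_equalityI)
  fix i assume "i < length (shifted_rhs (xs @ mid @ map uminus (rev ys)) a b)"
  then have i: "i < n" by simp
  consider "i < q" | "\<not> i < q" "i < q + (u + v)" | "\<not> i < q + (u + v)" by linarith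
  then show "shifted_rhs (xs @ mid @ map uminus (rev ys)) a b ! i = (rhs_head b @ rhs_middle mid @ rhs_tail a) ! i"
  proof cases
    case 1
    then show ?thesis using i length_xs by (simp add: shifted_rhs_def rhs_head_def corr_int_def nth_append)
  next
    case 2
    then have "i < n - p" "i - q < u + v" using n_eq p_q by linarith+
    then show ?thesis using 2 i length_xs assms
      by (simp add: shifted_rhs_def rhs_middle_def corr_int_def nth_append)
  next
    case 3
    define t where "t = i - q - (u + v)"
    have t: "t < p" "i = q + (u + v) + t" using i 3 n_eq p_q by (auto simp: t_def)
    then have "\<not> i < n - p" "n - 1 - i = p - 1 - t" using n_eq p_q by auto
    moreover have "map uminus (rev ys) ! t = - ys ! (p - 1 - t)" using t length_ys by (simp add: rev_nth)
    ultimately show ?thesis using i t 3 length_xs assms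
      by (simp add: shifted_rhs_def rhs_tail_def corr_int_def nth_append)
  qed
qed (simp only: length_shifted_rhs, simp add: n_eq p_q[symmetric])

subsection \<open>Uniqueness\<close>

lemma split_prescribed_ends:
  assumes "length r = n" "take q r = xs" "drop (n - p) r = map uminus (rev ys)"
  obtains mid where "r = xs @ mid @ map uminus (rev ys)" "length mid = u + v"
proof
  have "q \<le> n - p" using p_q k_le by simp
  then have "take q (take (n - p) r) = xs" using assms(2) by (simp add: min_def)
  then have "take (n - p) r = xs @ drop q (take (n - p) r)"
    by (metis append_take_drop_id)
  then have "r = (xs @ drop q (take (n - p) r)) @ drop (n - p) r"
    by (metis append_take_drop_id)
  then show "r = xs @ drop q (take (n - p) r) @ map uminus (rev ys)"
    using assms(3) by simp
  show "length (drop q (take (n - p) r)) = u + v" using assms(1) n_eq p_q by simp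
qed

lemma middle_abs:
  assumes "sorted_wrt (>) r" "distinct (map abs r)" "\<forall>x\<in>set r. 1 \<le> \<bar>x\<bar> \<and> \<bar>x\<bar> \<le> int n"
    and r: "r = xs @ mid @ map uminus (rev ys)" and "length mid = u + v"
  shows "sorted_wrt (>) mid" "distinct (map abs mid)" "set (map abs mid) = {1..int (u + v)}"
    "\<forall>x\<in>set mid. 1 \<le> \<bar>x\<bar>"
proof -
  show "sorted_wrt (>) mid" using assms(1) r by (simp add: sorted_wrt_append)
  have d: "distinct (map abs xs @ map abs mid @ map abs (map uminus (rev ys)))" using assms(2) r by simp
  then show "distinct (map abs mid)" by simp
  have "set (map abs xs) = set xs" "set (map abs (map uminus (rev ys))) = set ys"
    using xs_range ys_range by force+
  then have "z \<in> {1..int n} - {int (u + v) + 1..int n}" if "z \<in> set (map abs mid)" for z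
    using that d assms(3) r xs_ys_union[symmetric] by auto
  then have sub: "set (map abs mid) \<subseteq> {1..int (u + v)}" by fastforce
  have "card (set (map abs mid)) = u + v"
    using distinct_card[OF \<open>distinct (map abs mid)\<close>] assms(5) by simp
  then show "set (map abs mid) = {1..int (u + v)}" using card_subset_eq[OF _ sub] by simp
  then show "\<forall>x\<in>set mid. 1 \<le> \<bar>x\<bar>" by auto
qed

lemma shifted_I_ge: "\<forall>x\<in>set shifted_I. int u \<le> x"
proof
  fix x assume "x \<in> set shifted_I"
  then obtain r where r: "r < u" "x = I ! r - int k + int r" by (auto simp: shifted_I_def)
  then show "int u \<le> x" using I_nth_ge[OF r(1)] by simp
qed

lemma shifted_J_lt: "\<forall>x\<in>set shifted_J. x < int u"
proof
  fix x assume "x \<in> set shifted_J"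
  then obtain s where s: "s < v" "x = int u + int s + int k - J ! (v - 1 - s)"
    by (auto simp: shifted_J_def)
  then show "x < int u" using J_nth_ge[OF s(1)] by simp
qed

lemma filter_less_shifted_tau: "filter (\<lambda>x. x < int u) shifted_tau = shifted_J"
proof -
  have "filter (\<lambda>x. x < int u) shifted_I = []" using shifted_I_ge by (auto simp: filter_empty_conv)
  then show ?thesis using shifted_J_lt by (simp add: shifted_tau_split)
qed

lemma length_filter_greater_shifted_tau: "length (filter (\<lambda>x. int u < x) shifted_tau) \<le> u"
proof -
  have "filter (\<lambda>x. int u < x) shifted_J = []" using shifted_J_lt by (auto simp: filter_empty_conv)
  then show ?thesis using length_filter_le[of _ shifted_I] by (simp add: shifted_tau_split)
qed

text \<open>Since the middle block is strictly decreasing, \<open>rhs_middle\<close> is weakly decreasing; a sign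
in the wrong place would produce more than \<open>v\<close> entries below \<open>u\<close>, or more than \<open>u\<close> above it.\<close>

lemma middle_sign_split:
  assumes sm: "sorted_wrt (>) mid" and lm: "length mid = u + v" and am: "\<forall>x\<in>set mid. 1 \<le> \<bar>x\<bar>"
    and ms: "mset (o1 @ rhs_middle mid @ o2) = mset shifted_tau"
  shows "\<forall>m<u. 0 < mid ! m" "\<forall>m. u \<le> m \<and> m < u + v \<longrightarrow> mid ! m < 0"
proof -
  have le: "card {i. i < u + v \<and> P (rhs_middle mid ! i)} \<le> length (filter P shifted_tau)" for P
    using length_filter_eq_if_mset_eq[OF ms, of P] by (simp add: length_filter_conv_card)
  have a1: "1 \<le> \<bar>mid ! m\<bar>" if "m < u + v" for m using am that lm by simp
  show "\<forall>m<u. 0 < mid ! m"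
  proof (rule ccontr)
    assume "\<not> (\<forall>m<u. 0 < mid ! m)"
    then obtain m0 where "m0 < u" "\<not> 0 < mid ! m0" by auto
    with a1[of m0] have m0: "m0 < u" "mid ! m0 \<le> -1" by auto
    have "{m0..<u+v} \<subseteq> {i. i < u + v \<and> rhs_middle mid ! i < int u}"
    proof
      fix m assume m: "m \<in> {m0..<u+v}"
      then have "mid ! m + int (m - m0) \<le> mid ! m0" using sorted_wrt_gt_nth_gap[OF sm, of m0 m] lm by auto
      then show "m \<in> {i. i < u + v \<and> rhs_middle mid ! i < int u}" using m m0 by (auto simp: rhs_middle_nth)
    qed
    then have "card {m0..<u+v} \<le> card {i. i < u + v \<and> rhs_middle mid ! i < int u}"
      by (rule card_mono[rotated]) simp
    then show False using le[of "\<lambda>x. x < int u"] filter_less_shifted_tau m0 by simp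
  qed
  show "\<forall>m. u \<le> m \<and> m < u + v \<longrightarrow> mid ! m < 0"
  proof (rule ccontr)
    assume "\<not> (\<forall>m. u \<le> m \<and> m < u + v \<longrightarrow> mid ! m < 0)"
    then obtain m0 where "u \<le> m0" "m0 < u + v" "\<not> mid ! m0 < 0" by auto
    with a1[of m0] have m0: "u \<le> m0" "m0 < u + v" "1 \<le> mid ! m0" by auto
    have "{0..m0} \<subseteq> {i. i < u + v \<and> int u < rhs_middle mid ! i}"
    proof
      fix m assume m: "m \<in> {0..m0}"
      then have "mid ! m0 + int (m0 - m) \<le> mid ! m" using sorted_wrt_gt_nth_gap[OF sm, of m m0] lm m0 by auto
      then show "m \<in> {i. i < u + v \<and> int u < rhs_middle mid ! i}" using m m0 by (auto simp: rhs_middle_nth)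
    qed
    then have "card {0..m0} \<le> card {i. i < u + v \<and> int u < rhs_middle mid ! i}"
      by (rule card_mono[rotated]) simp
    then show False using le[of "\<lambda>x. int u < x"] length_filter_greater_shifted_tau m0 by simp
  qed
qed

lemma middle_negative_part:
  assumes sm: "sorted_wrt (>) mid" and lm: "length mid = u + v" and am: "\<forall>x\<in>set mid. 1 \<le> \<bar>x\<bar>"
    and ms: "mset (o1 @ rhs_middle mid @ o2) = mset shifted_tau"
  shows "drop u mid = map (\<lambda>j. int k - j) (rev J)"
proof -
  note sign = middle_sign_split[OF sm lm am ms]
  have ge: "int u \<le> rhs_middle mid ! m" if "m < u" for m
  proof -
    have "mid ! (u - 1) + int (u - 1 - m) \<le> mid ! m"
      using sorted_wrt_gt_nth_gap[OF sm, of m "u - 1"] that lm by simp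
    moreover have "0 < mid ! (u - 1)" using sign(1) that by simp
    ultimately show ?thesis using that by (simp add: rhs_middle_nth)
  qed
  have lt: "rhs_middle mid ! m < int u" if "u \<le> m" "m < u + v" for m
  proof -
    have "mid ! m + int (m - u) \<le> mid ! u" using sorted_wrt_gt_nth_gap[OF sm, of u m] that lm by simp
    moreover have "mid ! u < 0" using sign(2) that by simp
    ultimately show ?thesis using that by (simp add: rhs_middle_nth)
  qed
  have "filter (\<lambda>x. x < int u) (take u (rhs_middle mid)) = []"
    using ge by (auto simp: filter_empty_conv in_set_conv_nth not_less[symmetric])
  moreover have "filter (\<lambda>x. x < int u) (drop u (rhs_middle mid)) = drop u (rhs_middle mid)"
    using lt by (auto simp: filter_id_conv in_set_conv_nth)
  ultimately have below: "filter (\<lambda>x. x < int u) (rhs_middle mid) = drop u (rhs_middle mid)"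
    by (metis append_take_drop_id filter_append self_append_conv2)
  have "length (filter (\<lambda>x. x < int u) (o1 @ rhs_middle mid @ o2)) = v"
    using length_filter_eq_if_mset_eq[OF ms] filter_less_shifted_tau by simp
  then have "filter (\<lambda>x. x < int u) (o1 @ rhs_middle mid @ o2) = drop u (rhs_middle mid)"
    using below by simp
  then have "mset (drop u (rhs_middle mid)) = mset shifted_J"
    using ms filter_less_shifted_tau by (metis mset_filter)
  moreover have "sorted_wrt (\<ge>) (drop u (rhs_middle mid))"
  proof (subst sorted_wrt_iff_nth_less, intro allI impI)
    fix i j assume ij: "i < j" "j < length (drop u (rhs_middle mid))"
    then have "mid ! (u + j) + int (j - i) \<le> mid ! (u + i)"
      using sorted_wrt_gt_nth_gap[OF sm, of "u + i" "u + j"] lm by simp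
    then show "drop u (rhs_middle mid) ! j \<le> drop u (rhs_middle mid) ! i"
      using ij by (simp add: rhs_middle_nth)
  qed
  moreover have "sorted_wrt (\<ge>) shifted_J"
  proof (subst sorted_wrt_iff_nth_less, intro allI impI)
    fix i j assume ij: "i < j" "j < length shifted_J"
    then have "J ! (v - 1 - i) + int (j - i) \<le> J ! (v - 1 - j)"
      using sorted_wrt_gt_nth_gap[OF sorted_J, of "v - 1 - j" "v - 1 - i"] length_J by simp
    then show "shifted_J ! j \<le> shifted_J ! i" using ij by (simp add: shifted_J_def)
  qed
  ultimately have "drop u (rhs_middle mid) = shifted_J" by (rule sorted_wrt_ge_mset_unique[rotated 2])
  then show ?thesis
    using lm length_J
    by (auto simp: list_eq_iff_nth_eq rhs_middle_nth shifted_J_def rev_nth algebra_simps)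
qed

lemma middle_positive_part:
  assumes sm: "sorted_wrt (>) mid" and lm: "length mid = u + v"
    and dm: "distinct (map abs mid)" and stm: "set (map abs mid) = {1..int (u + v)}"
    and pos: "\<forall>m<u. 0 < mid ! m" and neg: "drop u mid = map (\<lambda>j. int k - j) (rev J)"
  shows "take u mid = map (\<lambda>i. i - int k) I"
proof -
  have J_gt: "\<forall>j\<in>set J. int k + 1 \<le> j" using I_J_union by auto
  have "abs ` set (drop u mid) = (\<lambda>j. \<bar>int k - j\<bar>) ` set J"
    unfolding neg by (simp add: image_image)
  also have "\<dots> = (\<lambda>j. j - int k) ` set J"
    using J_gt by (intro image_cong) auto
  moreover have "abs ` set (take u mid) = set (take u mid)"
    using pos lm by (force simp: in_set_conv_nth)
  moreover have "abs ` set (take u mid) \<inter> abs ` set (drop u mid) = {}"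
    using dm by (metis append_take_drop_id distinct_append map_append set_map)
  moreover have "set (map abs mid) = abs ` set (take u mid) \<union> abs ` set (drop u mid)"
    by (metis append_take_drop_id image_Un list.set_map set_append)
  ultimately have "set (take u mid) = {1..int (u + v)} - (\<lambda>j. j - int k) ` set J"
    using stm by auto
  also have "\<dots> = (\<lambda>i. i - int k) ` ({int k + 1..int n - int k} - set J)"
    using n_eq by (subst image_set_diff) (simp_all add: inj_def image_diff_atLeastAtMost)
  also have "\<dots> = set (map (\<lambda>i. i - int k) I)"
  proof -
    have "{int k + 1..int n - int k} - set J = set I" using I_J_union I_J_disjoint by auto
    then show ?thesis by simp
  qed
  finally have "set (take u mid) = set (map (\<lambda>i. i - int k) I)" .
  moreover have "sorted_wrt (>) (take u mid)"
    using sm by (metis append_take_drop_id sorted_wrt_append)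
  moreover have "sorted_wrt (>) (map (\<lambda>i. i - int k) I)"
    using sorted_I by (simp add: sorted_wrt_map)
  ultimately show ?thesis by (rule sorted_wrt_gt_set_unique[rotated -1])
qed

definition mid0 :: "int list" where
  "mid0 = map (\<lambda>i. i - int k) I @ map (\<lambda>j. int k - j) (rev J)"

lemma length_mid0: "length mid0 = u + v"
  using length_I length_J by (simp add: mid0_def)

lemma middle_unique:
  assumes "sorted_wrt (>) mid" "length mid = u + v" "\<forall>x\<in>set mid. 1 \<le> \<bar>x\<bar>"
    and "distinct (map abs mid)" "set (map abs mid) = {1..int (u + v)}"
    and "mset (o1 @ rhs_middle mid @ o2) = mset shifted_tau"
  shows "mid = mid0"
  using middle_positive_part[OF assms(1,2,4,5) middle_sign_split(1)[OF assms(1-3,6)]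
      middle_negative_part[OF assms(1-3,6)]]
    middle_negative_part[OF assms(1-3,6)]
  by (metis append_take_drop_id mid0_def)

lemma rhs_middle_mid0: "rhs_middle mid0 = shifted_I @ shifted_J"
proof (rule nth_equalityI)
  fix m assume "m < length (rhs_middle mid0)"
  then have m: "m < u + v" by simp
  then show "rhs_middle mid0 ! m = (shifted_I @ shifted_J) ! m"
    using length_I length_J
    by (cases "m < u") (simp_all add: rhs_middle_nth mid0_def shifted_I_def shifted_J_def nth_append rev_nth)
qed simp

definition b0 :: "nat list" where
  "b0 = map (\<lambda>i. nat ((xs ! i + int i - int q - int \<eta> - int u) div 2)) [0..<q]"

definition a0 :: "nat list" where
  "a0 = map (\<lambda>j. nat ((ys ! j - int v - int (p - 1 - j) - int \<epsilon>) div 2)) [0..<p]"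

lemma length_b0: "length b0 = q"
  by (simp add: b0_def)

lemma length_a0: "length a0 = p"
  by (simp add: a0_def)

lemma corrections_unique:
  assumes la: "length a = p" and lb: "length b = q"
    and ms: "mset (rhs_head b @ rhs_middle mid0 @ rhs_tail a) = mset shifted_tau"
  shows "a = a0" "b = b0"
proof -
  have "mset (rhs_head b) + mset (rhs_tail a) = replicate_mset (2 * k) (int u)"
    using ms by (simp add: rhs_middle_mid0 shifted_tau_split ac_simps)
  then have all_u: "x = int u" if "x \<in> set (rhs_head b) \<union> set (rhs_tail a)" for x
    using that by (metis Un_iff in_replicate_mset set_mset_mset union_iff)
  show "b = b0"
  proof (rule nth_equalityI)
    fix i assume "i < length b"
    then have i: "i < q" using lb by simp
    then have "xs ! i + int i - int q - (int \<eta> + 2 * int (b ! i)) = int u"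
      using all_u[of "rhs_head b ! i"] by (simp add: rhs_head_def)
    then show "b ! i = b0 ! i" using i by (simp add: b0_def)
  qed (simp add: lb length_b0)
  show "a = a0"
  proof (rule nth_equalityI)
    fix j assume "j < length a"
    then have j: "j < p" using la by simp
    then have "rhs_tail a ! (p - 1 - j) = - ys ! j + int (u + v) + int (p - 1 - j) + int \<epsilon> + 2 * int (a ! j)"
      by (simp add: rhs_tail_def)
    moreover have "rhs_tail a ! (p - 1 - j) = int u" using all_u j by simp
    ultimately show "a ! j = a0 ! j" using j by (simp add: a0_def)
  qed (simp add: la length_a0)
qed

definition rho0 :: "int list" where
  "rho0 = xs @ mid0 @ map uminus (rev ys)"

definition lhs_of :: "int list \<Rightarrow> nat list \<Rightarrow> nat list \<Rightarrow> rat list" where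
  "lhs_of r a b = map (\<lambda>z. of_int z - ((of_nat n - 1) / 2 - of_nat k)) (shifted_rhs r a b)"

lemma lhs_of_shifted:
  assumes "map shift L = map of_int (shifted_rhs r a b)"
  shows "L = lhs_of r a b"
proof -
  have "L = map (\<lambda>z. z - ((of_nat n - 1) / 2 - of_nat k)) (map shift L)"
    by (simp add: shift_def o_def)
  then show ?thesis using assms by (simp add: lhs_of_def o_def)
qed

lemma solution_unique:
  assumes sol: "solE n p q \<epsilon> \<eta> (tau_of n k I J) w \<sigma> a b"
    and head: "take q (sp_act n \<sigma> (rho_g n)) = map of_int xs"
    and tail: "drop (n - p) (sp_act n \<sigma> (rho_g n)) = map of_int (map uminus (rev ys))"
  shows "signed_rho n \<sigma> = rho0 \<and> a = a0 \<and> b = b0 \<and> perm_act w (tau_of n k I J) = lhs_of rho0 a0 b0"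
proof -
  define r where "r = signed_rho n \<sigma>"
  define L where "L = perm_act w (tau_of n k I J)"
  have w: "w permutes {..<n}" and W: "W1 n \<sigma>" and la: "length a = p" and lb: "length b = q"
    and eq: "vadd (vadd L (rho_k n)) (replicate n ((of_nat q - of_nat p) / 2))
               = vadd (sp_act n \<sigma> (rho_g n)) (corr n \<epsilon> \<eta> (p + q) a b)"
    using sol by (auto simp: solE_def L_def)
  have \<sigma>: "signed_perm n \<sigma>" using W by (simp add: W1_def)
  have r: "sp_act n \<sigma> (rho_g n) = map of_int r" using sp_act_rho_g[OF \<sigma>] by (simp add: r_def)
  have "inj (of_int :: int \<Rightarrow> rat)" by (simp add: inj_def)
  then have "take q r = xs" "drop (n - p) r = map uminus (rev ys)"
    using head tail r by (simp_all add: take_map drop_map inj_map_eq_map del: map_map)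
  then obtain mid where r_mid: "r = xs @ mid @ map uminus (rev ys)" and lm: "length mid = u + v"
    using split_prescribed_ends[of r] r_def by auto
  note mid = middle_abs[OF W1_sorted_signed_rho[OF W] distinct_abs_signed_rho[OF \<sigma>]
      signed_rho_abs_bounds[OF \<sigma>], folded r_def, OF r_mid lm]
  have lL: "length L = n" using length_tau by (simp add: L_def perm_act_def)
  have shifted: "map shift L = map of_int (shifted_rhs r a b)"
    using equation_iff_shifted[OF lL _ la lb, of r] eq r by (simp add: r_def)
  have "mset L = mset (tau_of n k I J)"
    unfolding L_def using mset_perm_act w length_tau by simp
  then have "mset (map of_int (shifted_rhs r a b) :: rat list) = mset (map of_int shifted_tau)"
    using shifted shift_tau by (metis mset_map)
  then have ms: "mset (rhs_head b @ rhs_middle mid @ rhs_tail a) = mset shifted_tau"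
    using mset_map_of_int_eq shifted_rhs_split[OF lm] r_mid by metis
  have "mid = mid0" by (rule middle_unique[OF mid(1) lm mid(4,2,3) ms])
  then have "r = rho0" "a = a0" "b = b0"
    using r_mid corrections_unique[OF la lb] ms by (auto simp: rho0_def)
  then show ?thesis using lhs_of_shifted[OF shifted] by (simp add: r_def L_def)
qed

subsection \<open>Existence\<close>

lemma mid0_props:
  "sorted_wrt (>) mid0" "\<forall>x\<in>set mid0. 1 \<le> \<bar>x\<bar> \<and> \<bar>x\<bar> \<le> int (u + v)" "distinct (map abs mid0)"
proof -
  have I_range: "\<forall>i\<in>set I. int k + 1 \<le> i \<and> i \<le> int n - int k"
    and J_range: "\<forall>j\<in>set J. int k + 1 \<le> j \<and> j \<le> int n - int k"
    using I_J_union by auto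
  have "sorted_wrt (>) (map (\<lambda>i. i - int k) I)" using sorted_I by (simp add: sorted_wrt_map)
  moreover have "sorted_wrt (>) (map (\<lambda>j. int k - j) (rev J))"
    using sorted_J by (simp add: sorted_wrt_map sorted_wrt_rev)
  moreover have "\<forall>x\<in>set (map (\<lambda>i. i - int k) I). \<forall>y\<in>set (map (\<lambda>j. int k - j) (rev J)). y < x"
    using I_range J_range by fastforce
  ultimately show "sorted_wrt (>) mid0" unfolding mid0_def by (simp add: sorted_wrt_append)
  show "\<forall>x\<in>set mid0. 1 \<le> \<bar>x\<bar> \<and> \<bar>x\<bar> \<le> int (u + v)"
    unfolding mid0_def using I_range J_range n_eq by auto
  have "map abs mid0 = map (\<lambda>i. i - int k) I @ map (\<lambda>j. j - int k) (rev J)"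
    unfolding mid0_def using I_range J_range by auto
  moreover have "distinct (map (\<lambda>i. i - int k) I @ map (\<lambda>j. j - int k) (rev J))"
    using distinct_if_sorted_wrt_gt[OF sorted_I] distinct_if_sorted_wrt_gt[OF sorted_J] I_J_disjoint
    by (auto simp: distinct_map inj_on_def)
  ultimately show "distinct (map abs mid0)" by simp
qed

lemma length_rho0: "length rho0 = n"
  using length_mid0 length_xs length_ys n_eq p_q by (simp add: rho0_def)

lemma rho0_props:
  "sorted_wrt (>) rho0" "distinct (map abs rho0)" "\<forall>x\<in>set rho0. 1 \<le> \<bar>x\<bar> \<and> \<bar>x\<bar> \<le> int n"
proof -
  note mid0 = mid0_props
  have xs_r: "\<forall>x\<in>set xs. int (u + v) + 1 \<le> x \<and> x \<le> int n" using xs_range by auto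
  have ys_r: "\<forall>y\<in>set ys. int (u + v) + 1 \<le> y \<and> y \<le> int n" using ys_range by auto
  have "sorted_wrt (>) (map uminus (rev ys))" using sorted_ys by (simp add: sorted_wrt_map sorted_wrt_rev)
  moreover have "\<forall>x\<in>set xs. \<forall>y\<in>set mid0. y < x" using xs_r mid0(2) by fastforce
  moreover have "\<forall>x\<in>set mid0. \<forall>y\<in>set ys. - y < x" using ys_r mid0(2) by fastforce
  moreover have "\<forall>x\<in>set xs. \<forall>y\<in>set ys. - y < x" using xs_r ys_r by fastforce
  ultimately show "sorted_wrt (>) rho0"
    unfolding rho0_def using sorted_xs mid0(1) by (auto simp: sorted_wrt_append)
  have "map abs xs = xs" by (rule map_idI) (use xs_r in auto)
  moreover have "map abs (map uminus (rev ys)) = rev ys" unfolding map_map by (rule map_idI) (use ys_r in auto)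
  ultimately have "map abs rho0 = xs @ map abs mid0 @ rev ys" unfolding rho0_def by simp
  moreover have "distinct (xs @ map abs mid0 @ rev ys)"
  proof -
    have "set (map abs mid0) \<inter> set xs = {}" using mid0(2) xs_r by fastforce
    moreover have "set (map abs mid0) \<inter> set ys = {}" using mid0(2) ys_r by fastforce
    moreover have "set xs \<inter> set ys = {}" using xs_ys_disjoint by auto
    ultimately show ?thesis
      using distinct_if_sorted_wrt_gt[OF sorted_xs] distinct_if_sorted_wrt_gt[OF sorted_ys] mid0(3) by auto
  qed
  ultimately show "distinct (map abs rho0)" by simp
  show "\<forall>x\<in>set rho0. 1 \<le> \<bar>x\<bar> \<and> \<bar>x\<bar> \<le> int n"
    unfolding rho0_def using xs_r ys_r mid0(2) n_eq by fastforce
qed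

lemma rhs_head_b0: "rhs_head b0 = replicate q (int u)"
proof (rule nth_equalityI)
  fix i assume "i < length (rhs_head b0)"
  then have i: "i < q" by simp
  define X where "X = xs ! i + int i - int q - int \<eta> - int u"
  have "[xs ! (Suc i - 1) + int u + int q + 1 - int (Suc i) = int \<eta>] (mod 2)"
    by (rule bspec[OF xs_parity]) (use i in simp)
  then have "(xs ! i + int u + int q - int i) mod 2 = int \<eta> mod 2"
    by (simp add: cong_def add.assoc add_diff_eq)
  then have "X mod 2 = 0" unfolding X_def by presburger
  moreover have "- 1 \<le> X" using xs_nth_ge[OF i] eta unfolding X_def by auto
  ultimately have "2 * int (nat (X div 2)) = X" by (rule twice_nat_half_of_even)
  then show "rhs_head b0 ! i = replicate q (int u) ! i" using i by (simp add: rhs_head_def b0_def X_def)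
qed simp

lemma rhs_tail_a0: "rhs_tail a0 = replicate p (int u)"
proof (rule nth_equalityI)
  fix t assume "t < length (rhs_tail a0)"
  then have t: "t < p" by simp
  define j where "j = p - 1 - t"
  have j: "j < p" "p - 1 - j = t" "p - Suc t = j" using t by (auto simp: j_def)
  define Y where "Y = ys ! j - int v - int (p - 1 - j) - int \<epsilon>"
  have "[ys ! (p - Suc t) + int v + int (Suc t) - 1 = int \<epsilon>] (mod 2)"
    by (rule bspec[OF ys_parity]) (use t in simp)
  then have "(ys ! j + int v + int t) mod 2 = int \<epsilon> mod 2" using j by (simp add: cong_def add.assoc)
  then have "Y mod 2 = 0" unfolding Y_def using j by presburger
  moreover have "- 1 \<le> Y" using ys_nth_ge[OF j(1)] eps j unfolding Y_def by auto
  ultimately have "2 * int (nat (Y div 2)) = Y" by (rule twice_nat_half_of_even)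
  moreover have "a0 ! j = nat (Y div 2)" using j by (simp add: a0_def Y_def)
  moreover have "rhs_tail a0 ! t = - ys ! j + int (u + v) + int t + int \<epsilon> + 2 * int (a0 ! j)"
    using t j by (simp add: rhs_tail_def)
  ultimately show "rhs_tail a0 ! t = replicate p (int u) ! t"
    using t j(2) unfolding Y_def by simp
qed simp

lemma sorted_b0: "sorted_wrt (\<ge>) b0"
proof (subst sorted_wrt_iff_nth_less, intro allI impI)
  fix i j assume ij: "i < j" "j < length b0"
  then have "xs ! j + int (j - i) \<le> xs ! i"
    using sorted_wrt_gt_nth_gap[OF sorted_xs, of i j] length_xs length_b0 by simp
  then have "(xs ! j + int j - int q - int \<eta> - int u) div 2 \<le> (xs ! i + int i - int q - int \<eta> - int u) div 2"
    using ij by (intro zdiv_mono1) auto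
  then show "b0 ! j \<le> b0 ! i" using ij length_b0 by (simp add: b0_def nat_mono)
qed

lemma sorted_a0: "sorted_wrt (\<ge>) a0"
proof (subst sorted_wrt_iff_nth_less, intro allI impI)
  fix i j assume ij: "i < j" "j < length a0"
  then have "ys ! j + int (j - i) \<le> ys ! i"
    using sorted_wrt_gt_nth_gap[OF sorted_ys, of i j] length_ys length_a0 by simp
  then have "(ys ! j - int v - int (p - 1 - j) - int \<epsilon>) div 2 \<le> (ys ! i - int v - int (p - 1 - i) - int \<epsilon>) div 2"
    using ij length_a0 by (intro zdiv_mono1) auto
  then show "a0 ! j \<le> a0 ! i" using ij length_a0 by (simp add: a0_def nat_mono)
qed

lemma solution_exists:
  obtains w \<sigma> where "solE n p q \<epsilon> \<eta> (tau_of n k I J) w \<sigma> a0 b0"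
    "take q (sp_act n \<sigma> (rho_g n)) = map of_int xs"
    "drop (n - p) (sp_act n \<sigma> (rho_g n)) = map of_int (map uminus (rev ys))"
proof -
  obtain \<sigma> where \<sigma>: "signed_perm n \<sigma>" "signed_rho n \<sigma> = rho0"
    using signed_rho_surj[OF length_rho0 rho0_props(2,3)] by blast
  have r: "sp_act n \<sigma> (rho_g n) = map of_int rho0" using sp_act_rho_g[OF \<sigma>(1)] \<sigma>(2) by simp
  have "sorted_wrt (\<ge>) rho0" by (rule sorted_wrt_mono_rel[OF _ rho0_props(1)]) simp
  then have W: "W1 n \<sigma>" using \<sigma> W1_iff_signed_rho by simp
  have "shifted_rhs rho0 a0 b0 = replicate q (int u) @ (shifted_I @ shifted_J) @ replicate p (int u)"
    using shifted_rhs_split[OF length_mid0] by (simp add: rho0_def rhs_head_b0 rhs_tail_a0 rhs_middle_mid0)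
  moreover have "replicate (2 * k) (int u) = replicate q (int u) @ replicate p (int u)"
    using p_q by (simp add: replicate_add[symmetric] add.commute)
  ultimately have "mset (shifted_rhs rho0 a0 b0) = mset shifted_tau"
    by (simp add: shifted_tau_split ac_simps)
  moreover have shift_lhs: "map shift (lhs_of rho0 a0 b0) = map of_int (shifted_rhs rho0 a0 b0)"
    by (simp add: lhs_of_def shift_def o_def)
  ultimately have "mset (map shift (lhs_of rho0 a0 b0)) = mset (map shift (tau_of n k I J))"
    using shift_tau by (metis mset_map)
  then have "mset (map (\<lambda>x. x - ((of_nat n - 1) / 2 - of_nat k)) (map shift (lhs_of rho0 a0 b0)))
      = mset (map (\<lambda>x. x - ((of_nat n - 1) / 2 - of_nat k)) (map shift (tau_of n k I J)))"
    by (metis mset_map)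
  then have "mset (lhs_of rho0 a0 b0) = mset (tau_of n k I J)"
    by (simp add: shift_def o_def)
  then obtain w where w: "w permutes {..<n}" "perm_act w (tau_of n k I J) = lhs_of rho0 a0 b0"
    using perm_act_surj[of "lhs_of rho0 a0 b0" "tau_of n k I J"] length_tau by auto
  have "length (lhs_of rho0 a0 b0) = n" by (simp add: lhs_of_def)
  then have "vadd (vadd (lhs_of rho0 a0 b0) (rho_k n)) (replicate n ((of_nat q - of_nat p) / 2))
      = vadd (sp_act n \<sigma> (rho_g n)) (corr n \<epsilon> \<eta> (p + q) a0 b0)"
    using equation_iff_shifted[OF _ length_rho0 length_a0 length_b0] shift_lhs r by simp
  then have "solE n p q \<epsilon> \<eta> (tau_of n k I J) w \<sigma> a0 b0"
    using w W length_a0 length_b0 sorted_a0 sorted_b0 by (simp add: solE_def)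
  moreover have "take q rho0 = xs" using length_xs by (simp add: rho0_def)
  moreover have "n - p = length (xs @ mid0)" using length_xs length_mid0 n_eq p_q by simp
  then have "drop (n - p) rho0 = map uminus (rev ys)" by (simp add: rho0_def)
  ultimately show ?thesis using that r by (simp add: take_map drop_map)
qed

lemma unique_solution_tuple:
  "\<exists>!t. t \<in> {(perm_act w (tau_of n k I J), \<sigma>, a, b) | w \<sigma> a b.
            solE n p q \<epsilon> \<eta> (tau_of n k I J) w \<sigma> a b \<and>
            take q (sp_act n \<sigma> (rho_g n)) = map of_int xs \<and>
            drop (n - p) (sp_act n \<sigma> (rho_g n)) = map of_int (map uminus (rev ys))}"
  (is "\<exists>!t. t \<in> ?S")
proof -
  obtain w \<sigma> where sol: "solE n p q \<epsilon> \<eta> (tau_of n k I J) w \<sigma> a0 b0"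
    "take q (sp_act n \<sigma> (rho_g n)) = map of_int xs"
    "drop (n - p) (sp_act n \<sigma> (rho_g n)) = map of_int (map uminus (rev ys))"
    by (rule solution_exists)
  show ?thesis
  proof (rule ex1I)
    show "(perm_act w (tau_of n k I J), \<sigma>, a0, b0) \<in> ?S" using sol by blast
    fix t assume "t \<in> ?S"
    then obtain w' \<sigma>' a b where t: "t = (perm_act w' (tau_of n k I J), \<sigma>', a, b)"
      and sol': "solE n p q \<epsilon> \<eta> (tau_of n k I J) w' \<sigma>' a b"
        "take q (sp_act n \<sigma>' (rho_g n)) = map of_int xs"
        "drop (n - p) (sp_act n \<sigma>' (rho_g n)) = map of_int (map uminus (rev ys))"
      by blast
    have "signed_perm n \<sigma>'" "signed_perm n \<sigma>"
      using sol'(1) sol(1) by (simp_all add: solE_def W1_def)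
    moreover have "signed_rho n \<sigma>' = signed_rho n \<sigma>"
      using solution_unique[OF sol] solution_unique[OF sol'] by simp
    ultimately have "\<sigma>' = \<sigma>" by (rule signed_rho_inject)
    then show "t = (perm_act w (tau_of n k I J), \<sigma>, a0, b0)"
      using t solution_unique[OF sol] solution_unique[OF sol'] by simp
  qed
qed

end

theorem mainTheorem5:
  fixes n k p q u v \<epsilon> \<eta> :: nat and I J xs ys :: "int list"
  assumes "k \<ge> 1" and "p > 0" and "q > 0" and "p + q = 2 * k" and "2 * k \<le> n"
    and "\<epsilon> \<in> {0, 1}" and "\<eta> \<in> {0, 1}"
    and "special_data n k u v I J"
    and "length xs = q" and "sorted_wrt (>) xs"
    and "length ys = p" and "sorted_wrt (>) ys"
    and "\<forall>x\<in>set xs. int (u + v + 1) \<le> x \<and> x \<le> int n"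
    and "\<forall>y\<in>set ys. int (u + v + 1) \<le> y \<and> y \<le> int n"
    and "\<forall>x\<in>set xs. \<forall>y\<in>set ys. x \<noteq> y"
    and "\<forall>i\<in>{1..q}. [xs ! (i - 1) + int u + int q + 1 - int i = int \<eta>] (mod 2)"
    and "\<forall>m\<in>{1..p}. [ys ! (p - m) + int v + int m - 1 = int \<epsilon>] (mod 2)"
  shows "\<exists>!t. t \<in> {(perm_act w (tau_of n k I J), \<sigma>, a, b) | w \<sigma> a b.
            solE n p q \<epsilon> \<eta> (tau_of n k I J) w \<sigma> a b \<and>
            take q (sp_act n \<sigma> (rho_g n)) = map of_int xs \<and>
            drop (n - p) (sp_act n \<sigma> (rho_g n)) = map of_int (map uminus (rev ys))}"
proof -
  interpret prescribed_ends n k p q u v \<epsilon> \<eta> I J xs ys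
    using assms by unfold_locales
  show ?thesis by (rule unique_solution_tuple)
qed

end
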